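(* Let $\{c_n\}_{n\ge1}$ be a real sequence, $\{d_{n+1}\}_{n\ge1}$ a positive chain sequence with minimal parameter sequence $\{\ell_{n+1}\}_{n\ge0}$, and let $P_0(x)=1$, $P_1(x)=x-c_1$, $P_{n+1}(x)=(x-c_{n+1})P_n(x)-d_{n+1}(x^2+1)P_{n-1}(x)$ for $n\ge1$. Let $\tau_0=1$, $\tau_n=\tau_{n-1}(1-ic_n)/(1+ic_n)$ for $n\ge1$, and let $\mu$ be the probability measure on the unit circle $\mathbb T$ whose Verblunsky coefficients are \[ \alpha_{n-1}=-\frac{1}{\tau_n}\,\frac{1-2\ell_{n+1}-ic_{n+1}}{1-ic_{n+1}},\qquad n\ge1 . \] For $k\ge1$ define, for $\zeta\ne1$ and $x=i(\zeta+1)/(\zeta-1)$ (equivalently $\zeta=(x+i)/(x-i)$), \[ \Phi_{k-1}(\zeta)=\frac{-i\,2^{k-1}}{\prod_{j=1}^k(1+ic_j)}\,\frac{1}{(x-i)^{k-1}}\Big[P_k(x)-(1-\ell_k)(x-i)P_{k-1}(x)\Big]. \] Then $\{\Phi_n\}_{n\ge0}$ are the monic orthogonal polynomials on the unit circle with respect to $\mu$, and they satisfy \[ \int_{\mathbb T}\overline{\Phi_m(\zeta)}\,\Phi_k(\zeta)\,d\mu(\zeta)=\frac{(1+c_1^2)\,2^{2k}\prod_{j=1}^{k+1}d_{j+1}}{\ell_{k+2}\prod_{j=1}^{k+1}(1+c_j^2)}\,\delta_{m,k},\qquad m,k\ge0 . \] Moreover, if $\{d_{n+1}\}_{n\ge1}$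 has multiple parameter sequences, then $\int_{\mathbb T}|\zeta-1|^{-2}\,d\mu(\zeta)$ is finite.
   Context: A sequence $\{d_{n+1}\}_{n\ge1}$ is a positive chain sequence if there is a parameter sequence $\{g_{n+1}\}_{n\ge0}$ with $0\le g_1<1$, $0<g_n<1$ for $n\ge2$, and $d_{n+1}=(1-g_n)g_{n+1}$ for $n\ge1$; the minimal parameter sequence $\{\ell_{n+1}\}_{n\ge0}$ is the one with $\ell_1=0$. The chain sequence has multiple parameter sequences if it admits more than one parameter sequence. For a nontrivial probability measure on $\mathbb T$ with monic orthogonal polynomials $\Phi_n$, the Verblunsky coefficients are $\alpha_n=-\overline{\Phi_{n+1}(0)}$, $n\ge0$. *)

theory Defs
  imports "HOL-Probability.Probability" "HOL-Computational_Algebra.Polynomial"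
begin

text \<open>Parameter sequences of a chain sequence. The chain sequence is indexed as in the paper:
  only the values d (n+1), n \<ge> 1, matter; a parameter sequence g is relevant at indices n \<ge> 1.\<close>
definition param_seq :: "(nat \<Rightarrow> real) \<Rightarrow> (nat \<Rightarrow> real) \<Rightarrow> bool" where
  "param_seq d g \<longleftrightarrow> 0 \<le> g 1 \<and> g 1 < 1 \<and> (\<forall>n\<ge>2. 0 < g n \<and> g n < 1)
     \<and> (\<forall>n\<ge>1. d (n+1) = (1 - g n) * g (n+1))"

definition positive_chain_seq :: "(nat \<Rightarrow> real) \<Rightarrow> bool" where
  "positive_chain_seq d \<longleftrightarrow> (\<exists>g. param_seq d g)"

definition minimal_param_seq :: "(nat \<Rightarrow> real) \<Rightarrow> (nat \<Rightarrow> real) \<Rightarrow> bool" where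
  "minimal_param_seq d l \<longleftrightarrow> param_seq d l \<and> l 1 = 0"

definition multiple_param_seqs :: "(nat \<Rightarrow> real) \<Rightarrow> bool" where
  "multiple_param_seqs d \<longleftrightarrow>
     (\<exists>g h. param_seq d g \<and> param_seq d h \<and> (\<exists>n\<ge>1. g n \<noteq> h n))"

fun Pn :: "(nat \<Rightarrow> real) \<Rightarrow> (nat \<Rightarrow> real) \<Rightarrow> nat \<Rightarrow> complex \<Rightarrow> complex" where
  "Pn c d 0 x = 1"
| "Pn c d (Suc 0) x = x - of_real (c 1)"
| "Pn c d (Suc (Suc n)) x =
     (x - of_real (c (n+2))) * Pn c d (Suc n) x - of_real (d (n+2)) * (x^2 + 1) * Pn c d n x"

fun tau :: "(nat \<Rightarrow> real) \<Rightarrow> nat \<Rightarrow> complex" where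
  "tau c 0 = 1"
| "tau c (Suc n) = tau c n * (1 - \<i> * of_real (c (n+1))) / (1 + \<i> * of_real (c (n+1)))"

definition nontrivial_prob_on_circle :: "complex measure \<Rightarrow> bool" where
  "nontrivial_prob_on_circle \<mu> \<longleftrightarrow> prob_space \<mu> \<and> sets \<mu> = sets borel
     \<and> emeasure \<mu> (- sphere 0 1) = 0 \<and> (\<forall>F. finite F \<longrightarrow> emeasure \<mu> (- F) > 0)"

definition monic_OP :: "complex measure \<Rightarrow> nat \<Rightarrow> complex poly \<Rightarrow> bool" where
  "monic_OP \<mu> n p \<longleftrightarrow> degree p = n \<and> lead_coeff p = 1 \<and>
     (\<forall>j<n. integral\<^sup>L \<mu> (\<lambda>z. cnj (z ^ j) * poly p z) = 0)"

definition monic_OPs :: "complex measure \<Rightarrow> (nat \<Rightarrow> complex poly) \<Rightarrow> bool" where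
  "monic_OPs \<mu> \<Phi> \<longleftrightarrow> (\<forall>n. monic_OP \<mu> n (\<Phi> n))"

definition verblunsky :: "complex measure \<Rightarrow> nat \<Rightarrow> complex" where
  "verblunsky \<mu> n = - cnj (poly (THE p. monic_OP \<mu> (Suc n) p) 0)"

end

theory Submission
  imports Defs
begin

text \<open>
  The Verblunsky coefficients determine the monic orthogonal polynomials through the Szeg\H{o}
  recursion \<open>Phi\<^sub>n\<^sub>+\<^sub>1 = z Phi\<^sub>n - cnj \<alpha>\<^sub>n Phi\<^sub>n\<^sup>*\<close>. Put \<open>\<zeta> = (x + \<i>) / (x - \<i>)\<close>. By the three-term
  recurrence and \<open>d\<^sub>m\<^sub>+\<^sub>2 = (1 - l\<^sub>m\<^sub>+\<^sub>1) l\<^sub>m\<^sub>+\<^sub>2\<close>, the brackets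
  \<open>Q\<^sub>m(w) = P\<^sub>m\<^sub>+\<^sub>1 - (1 - l\<^sub>m\<^sub>+\<^sub>1) (x - w) P\<^sub>m\<close> for \<open>w = \<plusminus>\<i>\<close> satisfy a recurrence of exactly the Szeg\H{o}
  shape, which yields the closed forms of \<open>Phi\<^sub>m\<close> and \<open>Phi\<^sub>m\<^sup>*\<close> by induction; the norms follow from
  \<open>\<parallel>Phi\<^sub>n\<^sub>+\<^sub>1\<parallel>\<^sup>2 = (1 - \<bar>\<alpha>\<^sub>n\<bar>\<^sup>2) \<parallel>Phi\<^sub>n\<parallel>\<^sup>2\<close>.

  For the integrability of \<open>\<bar>\<zeta> - 1\<bar>\<^sup>-\<^sup>2\<close> consider the functional
  \<open>L p = a p(1) - \<integral> w (p(w) - p(1)) / (w - 1) d\<mu>(w)\<close> with \<open>a = - (1 - \<i> c\<^sub>1) / 2\<close>. Along the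
  Szeg\H{o} recursion \<open>\<bar>L Phi\<^sub>k\<bar>\<^sup>2 / \<parallel>Phi\<^sub>k\<parallel>\<^sup>2 = (1 + c\<^sub>1\<^sup>2) / 4 \<Prod>\<^sub>j\<^sub>=\<^sub>2\<^sup>k\<^sup>+\<^sup>1 l\<^sub>j / (1 - l\<^sub>j)\<close>, and a parameter
  sequence \<open>H\<close> with \<open>H\<^sub>1 > 0\<close> bounds the sum of these products by \<open>1 / H\<^sub>1\<close>. Bessel's inequality then
  gives \<open>\<bar>L p\<bar>\<^sup>2 \<le> C \<parallel>p\<parallel>\<^sup>2\<close>. Applied to \<open>(((1 + z) / 2)\<^sup>n - 1) / (z - 1)\<close> this bounds the partial sums
  of \<open>\<Sum>\<^sub>k \<parallel>((1 + z) / 2)\<^sup>k\<parallel>\<^sup>2\<close>, and on the circle \<open>\<Sum>\<^sub>k \<bar>(1 + z) / 2\<bar>\<^sup>2\<^sup>k / 4 = \<bar>z - 1\<bar>\<^sup>-\<^sup>2\<close>.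
\<close>

section \<open>Polynomials on the unit circle\<close>

lemma poly_eq_sum_atMost:
  fixes p :: "'a::comm_semiring_1 poly"
  assumes "degree p \<le> n"
  shows "poly p z = (\<Sum>k\<le>n. coeff p k * z ^ k)"
proof -
  have "poly p z = (\<Sum>i\<le>degree p. coeff p i * z ^ i)" by (rule poly_altdef)
  also have "\<dots> = (\<Sum>k\<le>n. coeff p k * z ^ k)"
    by (rule sum.mono_neutral_left) (use assms in \<open>auto simp: coeff_eq_0\<close>)
  finally show ?thesis .
qed

lemma cnj_mult_self_unit: "cmod z = 1 \<Longrightarrow> cnj z * z = 1"
  using complex_norm_square[of z] by (simp add: mult.commute)

lemma cnj_power_mult_power_unit:
  assumes "cmod z = 1" "j \<le> n"
  shows "cnj (z ^ j) * z ^ n = z ^ (n - j)"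
proof -
  have "cnj (z ^ j) * z ^ n = (cnj z * z) ^ j * z ^ (n - j)"
    using assms(2) by (simp add: power_mult_distrib power_add[symmetric])
  then show ?thesis using cnj_mult_self_unit[OF assms(1)] by simp
qed

text \<open>The reversed polynomial \<open>p\<^sup>*(z) = z\<^sup>n cnj (p (1 / cnj z))\<close> of OPUC theory.\<close>
definition star_poly :: "nat \<Rightarrow> complex poly \<Rightarrow> complex poly" where
  "star_poly n p = (\<Sum>i\<le>n. monom (cnj (coeff p (n - i))) i)"

lemma coeff_star_poly: "coeff (star_poly n p) i = (if i \<le> n then cnj (coeff p (n - i)) else 0)"
  unfolding star_poly_def by (simp add: coeff_sum coeff_monom)

lemma star_poly_0_1 [simp]: "star_poly 0 1 = 1"
  by (simp add: star_poly_def)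

lemma poly_star_poly_unit:
  assumes z: "cmod z = 1" and p: "degree p \<le> n"
  shows "poly (star_poly n p) z = z ^ n * cnj (poly p z)"
proof -
  have "poly (star_poly n p) z = (\<Sum>i=0..n. cnj (coeff p (n - i)) * z ^ i)"
    by (simp add: star_poly_def poly_sum poly_monom atMost_atLeast0)
  also have "\<dots> = (\<Sum>k=0..n. cnj (coeff p k) * z ^ (n - k))"
    by (subst sum.atLeastAtMost_rev) (intro sum.cong refl, simp)
  also have "\<dots> = (\<Sum>k\<le>n. cnj (coeff p k) * (cnj (z ^ k) * z ^ n))"
    using cnj_power_mult_power_unit[OF z] by (simp add: atMost_atLeast0)
  also have "\<dots> = z ^ n * cnj (poly p z)"
    by (simp add: poly_eq_sum_atMost[OF p] sum_distrib_left mult_ac)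
  finally show ?thesis .
qed

lemma star_poly_szego_step:
  assumes "degree p \<le> n"
  shows "star_poly (Suc n) (pCons 0 p - smult g (star_poly n p))
       = star_poly n p - smult (cnj g) (pCons 0 p)"
proof (rule poly_eqI)
  fix i
  consider "i \<le> n" | "i = Suc n" | "i > Suc n" by linarith
  then show "coeff (star_poly (Suc n) (pCons 0 p - smult g (star_poly n p))) i
           = coeff (star_poly n p - smult (cnj g) (pCons 0 p)) i"
  proof cases
    case 1
    then show ?thesis
      by (cases i) (auto simp: coeff_star_poly coeff_pCons Suc_diff_le split: nat.split
                         intro!: arg_cong[where f = "coeff p"])
  qed (use assms in \<open>auto simp: coeff_star_poly coeff_pCons coeff_eq_0 split: nat.split\<close>)
qed

text \<open>\<open>half_power_quot n = (((1 + z) / 2)\<^sup>n - 1) / (z - 1)\<close>.\<close>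
fun half_power_quot :: "nat \<Rightarrow> complex poly" where
  "half_power_quot 0 = 0"
| "half_power_quot (Suc n) = smult (1/2) (1 + [:1, 1:] * half_power_quot n)"

declare half_power_quot.simps(2) [simp del]

lemma poly_half_power_quot_Suc:
  "poly (half_power_quot (Suc n)) z = (1 + (1 + z) * poly (half_power_quot n) z) / 2"
  by (simp add: half_power_quot.simps field_simps)

lemma poly_half_power_eq_quot:
  "poly ([:1/2, 1/2:] ^ n) z = 1 + (z - 1) * poly (half_power_quot n) z"
proof (induction n)
  case (Suc n)
  have "poly ([:1/2, 1/2:] ^ Suc n) z = (1 + z) / 2 * poly ([:1/2, 1/2:] ^ n) z"
    by (simp only: power_Suc poly_mult) (simp add: field_simps)
  then show ?case unfolding Suc.IH poly_half_power_quot_Suc by (simp add: field_simps)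
qed simp

lemma norm2_half_power_step:
  fixes z r :: complex
  assumes "cmod z = 1"
  shows "(cmod (1 + (z - 1) * r))\<^sup>2 + (cmod (1 + (1 + z) * r))\<^sup>2 = 2 + 4 * Re (z * r) + 4 * (cmod r)\<^sup>2"
proof -
  have "((Re z)\<^sup>2 + (Im z)\<^sup>2) * ((Re r)\<^sup>2 + (Im r)\<^sup>2) = (Re r)\<^sup>2 + (Im r)\<^sup>2"
    using assms by (simp add: cmod_def)
  then show ?thesis
    unfolding cmod_power2 by (simp add: algebra_simps power2_eq_square)
qed

lemma unit_cmod_add_sub_one_sq:
  assumes "cmod z = 1"
  shows "(cmod (1 + z))\<^sup>2 = 2 + 2 * Re z" and "(cmod (z - 1))\<^sup>2 = 2 - 2 * Re z"
proof -
  have "(Re z)\<^sup>2 + (Im z)\<^sup>2 = 1" using assms by (simp add: cmod_def)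
  then show "(cmod (1 + z))\<^sup>2 = 2 + 2 * Re z" and "(cmod (z - 1))\<^sup>2 = 2 - 2 * Re z"
    unfolding cmod_power2 by (simp_all add: power2_eq_square algebra_simps)
qed

lemma unit_Re_less_1:
  assumes "cmod z = 1" "z \<noteq> 1"
  shows "Re z < 1"
proof -
  have "(cmod (z - 1))\<^sup>2 > 0" using assms(2) by simp
  then show ?thesis using unit_cmod_add_sub_one_sq(2)[OF assms(1)] by simp
qed

lemma inverse_dist_sq_one_eq_suminf:
  assumes z: "cmod z = 1"
  shows "(if z = 1 then \<infinity> else ennreal (1 / (cmod (z - 1))\<^sup>2))
       = (\<Sum>k. ennreal ((cmod ((1 + z) / 2) ^ k)\<^sup>2 / 4))"
proof (cases "z = 1")
  case True
  have "(\<Sum>k. ennreal (1 / 4)) = \<infinity>"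
  proof (rule ccontr)
    assume "(\<Sum>k. ennreal (1 / 4)) \<noteq> \<infinity>"
    then have "summable (\<lambda>_::nat. 1 / 4 :: real)"
      by (intro summable_suminf_not_top) simp_all
    then show False by (simp add: summable_const_iff)
  qed
  with True show ?thesis by simp
next
  case False
  let ?q = "(cmod ((1 + z) / 2))\<^sup>2"
  have q: "?q = (2 + 2 * Re z) / 4"
    using unit_cmod_add_sub_one_sq(1)[OF z] by (simp add: norm_divide power_divide)
  have Rz: "Re z < 1" using unit_Re_less_1[OF z False] .
  then have q01: "0 \<le> ?q" "?q < 1" using q by auto
  have "(cmod ((1 + z) / 2) ^ k)\<^sup>2 = ?q ^ k" for k
    by (metis power_mult mult.commute)
  then have "(\<Sum>k. ennreal ((cmod ((1 + z) / 2) ^ k)\<^sup>2 / 4)) = (\<Sum>k. ennreal (?q ^ k / 4))"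
    by simp
  also have "\<dots> = ennreal (\<Sum>k. ?q ^ k / 4)"
    using q01 by (intro suminf_ennreal2) (auto intro!: summable_divide summable_geometric)
  also have "(\<Sum>k. ?q ^ k / 4) = 1 / (1 - ?q) / 4"
    using q01 by (simp add: suminf_divide[OF summable_geometric] suminf_geometric)
  also have "\<dots> = 1 / (cmod (z - 1))\<^sup>2"
    using Rz unfolding q unit_cmod_add_sub_one_sq(2)[OF z] by (simp add: field_simps)
  finally show ?thesis using False by simp
qed

section \<open>Orthogonal polynomials on the unit circle\<close>

locale circle_measure =
  fixes M :: "complex measure"
  assumes nontrivial: "nontrivial_prob_on_circle M"
begin

sublocale P: prob_space M
  using nontrivial unfolding nontrivial_prob_on_circle_def by blast

lemma sets_M: "sets M = sets borel"
  using nontrivial unfolding nontrivial_prob_on_circle_def by blast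

lemma space_M: "space M = UNIV"
  using sets_eq_imp_space_eq[OF sets_M] by simp

lemma AE_unit: "AE z in M. cmod z = 1"
proof -
  have "emeasure M (- sphere 0 1) = 0"
    using nontrivial unfolding nontrivial_prob_on_circle_def by blast
  then have "AE z in M. z \<notin> - sphere (0::complex) 1"
    using sets_M by (intro AE_I'[of "- sphere 0 1"]) auto
  then show ?thesis by eventually_elim auto
qed

lemma borel_measurable_continuous: "continuous_on UNIV f \<Longrightarrow> f \<in> borel_measurable M"
  using measurable_cong_sets[OF sets_M refl] borel_measurable_continuous_onI by metis

lemma integrable_continuous:
  fixes f :: "complex \<Rightarrow> 'b::{banach, second_countable_topology}"
  assumes f: "continuous_on UNIV f"
  shows "integrable M f"
proof -
  have "compact (f ` sphere 0 1)"
    using f by (intro compact_continuous_image) (auto intro: continuous_on_subset)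
  then obtain B where B: "\<forall>z\<in>sphere 0 1. norm (f z) \<le> B"
    using compact_imp_bounded[of "f ` sphere 0 1"] unfolding bounded_iff by auto
  have "AE z in M. norm (f z) \<le> B"
    using AE_unit by eventually_elim (use B in auto)
  then show ?thesis
    using borel_measurable_continuous[OF f] by (intro P.integrable_const_bound) auto
qed

lemma integral_cong_unit:
  fixes f g :: "complex \<Rightarrow> 'b::{banach, second_countable_topology}"
  assumes "\<And>z. cmod z = 1 \<Longrightarrow> f z = g z" "continuous_on UNIV f" "continuous_on UNIV g"
  shows "integral\<^sup>L M f = integral\<^sup>L M g"
  using assms(1) AE_unit
  by (intro integral_cong_AE borel_measurable_continuous assms(2,3)) (auto elim: AE_mp)

lemma integral_cnj: "continuous_on UNIV f \<Longrightarrow> (\<integral>z. cnj (f z) \<partial>M) = cnj (integral\<^sup>L M f)"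
  by (rule integral_bounded_linear[OF bounded_linear_cnj integrable_continuous])

lemma integral_shift_unit:
  assumes f: "continuous_on UNIV f"
  shows "(\<integral>z. cnj (z ^ Suc j) * (z * f z) \<partial>M) = (\<integral>z. cnj (z ^ j) * f z \<partial>M)"
proof (rule integral_cong_unit)
  fix z :: complex
  assume "cmod z = 1"
  then show "cnj (z ^ Suc j) * (z * f z) = cnj (z ^ j) * f z"
    using cnj_mult_self_unit[of z] by (simp add: mult_ac)
qed (auto intro!: continuous_intros f)

definition poly_inner :: "complex poly \<Rightarrow> complex poly \<Rightarrow> complex" where
  "poly_inner p q = (\<integral>z. cnj (poly p z) * poly q z \<partial>M)"

definition poly_norm2 :: "complex poly \<Rightarrow> real" where
  "poly_norm2 p = (\<integral>z. (cmod (poly p z))\<^sup>2 \<partial>M)"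

lemma poly_inner_eq_moments:
  assumes "degree r \<le> n"
  shows "poly_inner r q = (\<Sum>j\<le>n. cnj (coeff r j) * (\<integral>z. cnj (z ^ j) * poly q z \<partial>M))"
proof -
  have "poly_inner r q = (\<integral>z. (\<Sum>j\<le>n. cnj (coeff r j) * (cnj (z ^ j) * poly q z)) \<partial>M)"
    unfolding poly_inner_def
    by (subst poly_eq_sum_atMost[OF assms]) (auto simp: sum_distrib_right mult.assoc)
  also have "\<dots> = (\<Sum>j\<le>n. cnj (coeff r j) * (\<integral>z. cnj (z ^ j) * poly q z \<partial>M))"
    by (subst Bochner_Integration.integral_sum) (auto intro!: integrable_continuous continuous_intros)
  finally show ?thesis .
qed

lemma poly_inner_self: "poly_inner p p = of_real (poly_norm2 p)"
proof -
  have "poly_inner p p = (\<integral>z. of_real ((cmod (poly p z))\<^sup>2) \<partial>M)"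
    unfolding poly_inner_def
    by (intro Bochner_Integration.integral_cong refl) (metis complex_norm_square mult.commute)
  then show ?thesis unfolding poly_norm2_def by (simp del: of_real_power)
qed

lemma poly_norm2_1: "poly_norm2 1 = 1"
  by (simp add: poly_norm2_def P.prob_space)

lemma poly_norm2_nonneg: "poly_norm2 p \<ge> 0"
  unfolding poly_norm2_def by (rule Bochner_Integration.integral_nonneg) simp

lemma poly_norm2_pos:
  assumes "p \<noteq> 0"
  shows "poly_norm2 p > 0"
proof -
  let ?f = "\<lambda>z. (cmod (poly p z))\<^sup>2"
  have "poly_norm2 p \<noteq> 0"
  proof
    assume "poly_norm2 p = 0"
    then have "AE z in M. ?f z = 0"
      using integral_nonneg_eq_0_iff_AE[OF integrable_continuous, of ?f]
      by (simp add: poly_norm2_def continuous_intros)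
    then obtain N where N: "{z \<in> space M. poly p z \<noteq> 0} \<subseteq> N" "emeasure M N = 0" "N \<in> sets M"
      by (auto elim!: AE_E)
    have "emeasure M (- {z. poly p z = 0}) \<le> emeasure M N"
      using N by (intro emeasure_mono) (auto simp: space_M)
    moreover have "emeasure M (- {z. poly p z = 0}) > 0"
      using nontrivial poly_roots_finite[OF assms] unfolding nontrivial_prob_on_circle_def by blast
    ultimately show False using N by simp
  qed
  with poly_norm2_nonneg[of p] show ?thesis by linarith
qed

lemma poly_inner_cnj: "poly_inner p q = cnj (poly_inner q p)"
  unfolding poly_inner_def
  by (subst integral_cnj[symmetric]) (auto intro!: continuous_intros simp: mult.commute)

lemma poly_inner_diff_right: "poly_inner r (p - q) = poly_inner r p - poly_inner r q"
  unfolding poly_inner_def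
  by (simp add: ring_distribs, rule Bochner_Integration.integral_diff; intro integrable_continuous continuous_intros)

lemma poly_inner_smult_left: "poly_inner (smult a p) q = cnj a * poly_inner p q"
  unfolding poly_inner_def by (simp add: mult.assoc)

lemma poly_inner_smult_right: "poly_inner p (smult a q) = a * poly_inner p q"
  unfolding poly_inner_def by (simp add: mult_ac)

lemma poly_inner_sum_left: "poly_inner (\<Sum>k\<in>K. f k) q = (\<Sum>k\<in>K. poly_inner (f k) q)"
proof (cases "finite K")
  case True
  have "poly_inner (\<Sum>k\<in>K. f k) q = (\<integral>z. (\<Sum>k\<in>K. cnj (poly (f k) z) * poly q z) \<partial>M)"
    unfolding poly_inner_def by (simp add: poly_sum cnj_sum sum_distrib_right)
  also have "\<dots> = (\<Sum>k\<in>K. poly_inner (f k) q)"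
    unfolding poly_inner_def by (rule Bochner_Integration.integral_sum) (intro integrable_continuous continuous_intros)
  finally show ?thesis .
qed (simp add: poly_inner_def)

lemma poly_inner_sum_right: "poly_inner p (\<Sum>k\<in>K. f k) = (\<Sum>k\<in>K. poly_inner p (f k))"
  by (subst (1 2) poly_inner_cnj) (simp add: poly_inner_sum_left cnj_sum)

lemma monic_OP_ne_0: "monic_OP M n p \<Longrightarrow> p \<noteq> 0"
  by (auto simp: monic_OP_def)

lemma monic_OP_orthogonal: "monic_OP M n p \<Longrightarrow> degree r < n \<Longrightarrow> poly_inner r p = 0"
  by (subst poly_inner_eq_moments[of r "degree r"]) (auto simp: monic_OP_def)

lemma monic_OP_top_moment:
  assumes "monic_OP M n p"
  shows "(\<integral>z. cnj (z ^ n) * poly p z \<partial>M) = of_real (poly_norm2 p)"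
proof -
  have "poly_inner p p = (\<Sum>j\<le>n. cnj (coeff p j) * (\<integral>z. cnj (z ^ j) * poly p z \<partial>M))"
    using assms by (intro poly_inner_eq_moments) (simp add: monic_OP_def)
  also have "\<dots> = (\<Sum>j\<le>n. if j = n then \<integral>z. cnj (z ^ n) * poly p z \<partial>M else 0)"
    using assms by (intro sum.cong refl) (auto simp: monic_OP_def)
  finally show ?thesis by (simp add: poly_inner_self)
qed

lemma monic_OP_unique:
  assumes p: "monic_OP M n p" and q: "monic_OP M n q"
  shows "p = q"
proof (rule ccontr)
  assume "p \<noteq> q"
  then have "poly_norm2 (p - q) > 0" by (intro poly_norm2_pos) simp
  moreover have "degree (p - q) < n"
  proof (cases n)
    case 0
    with p q \<open>p \<noteq> q\<close> show ?thesis by (auto simp: monic_OP_def) (metis degree_0_id)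
  next
    case (Suc m)
    have "degree (p - q) \<le> m"
    proof (rule degree_le, intro allI impI)
      fix i
      assume "m < i"
      then consider "i = n" | "i > n" using Suc by linarith
      then show "coeff (p - q) i = 0"
        using p q by cases (auto simp: monic_OP_def coeff_eq_0)
    qed
    then show ?thesis using Suc by simp
  qed
  then have "poly_inner (p - q) (p - q) = 0"
    using monic_OP_orthogonal[OF p] monic_OP_orthogonal[OF q] by (simp add: poly_inner_diff_right)
  ultimately show False by (simp add: poly_inner_self)
qed

lemma integral_star_poly:
  assumes "degree p \<le> n" "j \<le> n"
  shows "(\<integral>z. cnj (z ^ j) * poly (star_poly n p) z \<partial>M)
       = cnj (\<integral>z. cnj (z ^ (n - j)) * poly p z \<partial>M)"
proof -
  have "(\<integral>z. cnj (z ^ j) * poly (star_poly n p) z \<partial>M) = (\<integral>z. cnj (cnj (z ^ (n - j)) * poly p z) \<partial>M)"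
  proof (rule integral_cong_unit)
    fix z :: complex
    assume z: "cmod z = 1"
    show "cnj (z ^ j) * poly (star_poly n p) z = cnj (cnj (z ^ (n - j)) * poly p z)"
      using poly_star_poly_unit[OF z assms(1)] cnj_power_mult_power_unit[OF z assms(2)]
      by (simp add: mult.assoc[symmetric])
  qed (intro continuous_intros)+
  also have "\<dots> = cnj (\<integral>z. cnj (z ^ (n - j)) * poly p z \<partial>M)"
    by (rule integral_cnj) (intro continuous_intros)
  finally show ?thesis .
qed

lemma integral_star_poly_top:
  assumes "degree p \<le> n"
  shows "(\<integral>z. cnj (z ^ Suc n) * poly (star_poly n p) z \<partial>M) = cnj (\<integral>z. z * poly p z \<partial>M)"
proof -
  have "(\<integral>z. cnj (z ^ Suc n) * poly (star_poly n p) z \<partial>M) = (\<integral>z. cnj (z * poly p z) \<partial>M)"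
  proof (rule integral_cong_unit)
    fix z :: complex
    assume z: "cmod z = 1"
    have "cnj (z ^ Suc n) * (z ^ n * cnj (poly p z)) = (cnj (z ^ n) * z ^ n) * cnj (z * poly p z)"
      by (simp add: mult_ac)
    then show "cnj (z ^ Suc n) * poly (star_poly n p) z = cnj (z * poly p z)"
      using poly_star_poly_unit[OF z assms] cnj_power_mult_power_unit[OF z, of n n] by simp
  qed (intro continuous_intros)+
  also have "\<dots> = cnj (\<integral>z. z * poly p z \<partial>M)"
    by (rule integral_cnj) (intro continuous_intros)
  finally show ?thesis .
qed

text \<open>Given the monic OP of degree \<open>n\<close>, the one of degree \<open>n + 1\<close> is \<open>z p - g p\<^sup>*\<close>, with
  \<open>g\<close> chosen to kill the constant moment; all other moments vanish by orthogonality of \<open>p\<close>.\<close>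
lemma monic_OP_Suc:
  assumes p: "monic_OP M n p"
  defines "g \<equiv> (\<integral>z. z * poly p z \<partial>M) / (\<integral>z. poly (star_poly n p) z \<partial>M)"
  shows "monic_OP M (Suc n) (pCons 0 p - smult g (star_poly n p))"
    (is "monic_OP M (Suc n) ?q")
proof -
  have dp: "degree p = n" and lc: "coeff p n = 1"
    and orth: "\<And>j. j < n \<Longrightarrow> (\<integral>z. cnj (z ^ j) * poly p z \<partial>M) = 0"
    using p by (auto simp: monic_OP_def)
  have "(\<integral>z. poly (star_poly n p) z \<partial>M) = of_real (poly_norm2 p)"
    using integral_star_poly[of p n 0] monic_OP_top_moment[OF p] dp by simp
  then have star0: "(\<integral>z. poly (star_poly n p) z \<partial>M) \<noteq> 0"
    using poly_norm2_pos[OF monic_OP_ne_0[OF p]] by simp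
  have dq: "degree ?q = Suc n" and lq: "coeff ?q (Suc n) = 1"
    using lc dp by (auto intro!: antisym degree_le le_degree simp: coeff_star_poly coeff_eq_0)
  have "(\<integral>z. cnj (z ^ j) * poly ?q z \<partial>M) = 0" if j: "j < Suc n" for j
  proof -
    have "(\<integral>z. cnj (z ^ j) * poly ?q z \<partial>M)
        = (\<integral>z. cnj (z ^ j) * (z * poly p z) \<partial>M) - g * (\<integral>z. cnj (z ^ j) * poly (star_poly n p) z \<partial>M)"
      by (simp add: ring_distribs, subst Bochner_Integration.integral_diff)
         (auto intro!: integrable_continuous continuous_intros simp: mult_ac)
    also have "\<dots> = 0"
    proof (cases j)
      case 0
      then show ?thesis using star0 by (simp add: g_def)
    next
      case (Suc j')
      have "(\<integral>z. cnj (z ^ j) * (z * poly p z) \<partial>M) = 0"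
        unfolding Suc integral_shift_unit[OF continuous_on_poly[OF continuous_on_id]]
        using orth[of j'] Suc j by simp
      moreover have "(\<integral>z. cnj (z ^ j) * poly (star_poly n p) z \<partial>M) = 0"
        using integral_star_poly[of p n j] orth[of "n - j"] Suc j dp by simp
      ultimately show ?thesis by simp
    qed
    finally show ?thesis .
  qed
  with dq lq show ?thesis by (simp add: monic_OP_def)
qed

definition Phi :: "nat \<Rightarrow> complex poly" where
  "Phi n = (THE p. monic_OP M n p)"

lemma monic_OP_Phi: "monic_OP M n (Phi n)"
proof (induction n)
  case 0
  have "monic_OP M 0 1" by (simp add: monic_OP_def)
  then show ?case unfolding Phi_def using monic_OP_unique by (metis theI)
next
  case (Suc n)
  from monic_OP_Suc[OF Suc] show ?case unfolding Phi_def using monic_OP_unique by (metis theI)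
qed

lemma Phi_eqI: "monic_OP M n p \<Longrightarrow> Phi n = p"
  using monic_OP_unique monic_OP_Phi by blast

lemma Phi_0: "Phi 0 = 1"
  by (rule Phi_eqI) (simp add: monic_OP_def)

lemma degree_Phi: "degree (Phi n) = n" and lead_coeff_Phi: "coeff (Phi n) n = 1"
  using monic_OP_Phi[of n] by (auto simp: monic_OP_def)

lemma Phi_Suc: "Phi (Suc n) = pCons 0 (Phi n) - smult (cnj (verblunsky M n)) (star_poly n (Phi n))"
proof -
  define g where "g = (\<integral>z. z * poly (Phi n) z \<partial>M) / (\<integral>z. poly (star_poly n (Phi n)) z \<partial>M)"
  have eq: "Phi (Suc n) = pCons 0 (Phi n) - smult g (star_poly n (Phi n))"
    unfolding g_def by (rule Phi_eqI[OF monic_OP_Suc[OF monic_OP_Phi]])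
  have "verblunsky M n = - cnj (coeff (Phi (Suc n)) 0)"
    unfolding verblunsky_def Phi_def[symmetric] by (simp add: poly_0_coeff_0)
  also have "\<dots> = cnj g"
    by (subst eq) (simp add: coeff_star_poly lead_coeff_Phi)
  finally show ?thesis using eq by simp
qed

lemma star_Phi_Suc:
  "star_poly (Suc n) (Phi (Suc n)) = star_poly n (Phi n) - smult (verblunsky M n) (pCons 0 (Phi n))"
  by (subst Phi_Suc, subst star_poly_szego_step) (auto simp: degree_Phi)

lemma poly_Phi_Suc:
  "poly (Phi (Suc n)) z = z * poly (Phi n) z - cnj (verblunsky M n) * poly (star_poly n (Phi n)) z"
  by (subst Phi_Suc) simp

lemma poly_star_Phi_Suc:
  "poly (star_poly (Suc n) (Phi (Suc n))) z
     = poly (star_poly n (Phi n)) z - verblunsky M n * z * poly (Phi n) z"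
  by (subst star_Phi_Suc) simp

abbreviation Phi_norm2 :: "nat \<Rightarrow> real" where
  "Phi_norm2 n \<equiv> poly_norm2 (Phi n)"

lemma Phi_norm2_pos: "Phi_norm2 n > 0"
  using poly_norm2_pos[OF monic_OP_ne_0[OF monic_OP_Phi]] .

lemma poly_inner_Phi: "poly_inner (Phi m) (Phi k) = (if m = k then of_real (Phi_norm2 k) else 0)"
proof -
  consider "m < k" | "m = k" | "k < m" by linarith
  then show ?thesis
  proof cases
    case 1
    then show ?thesis using monic_OP_orthogonal[OF monic_OP_Phi, of "Phi m" k] by (simp add: degree_Phi)
  next
    case 3
    then show ?thesis
      using monic_OP_orthogonal[OF monic_OP_Phi, of "Phi k" m] poly_inner_cnj[of "Phi m"]
      by (simp add: degree_Phi)
  qed (simp add: poly_inner_self)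
qed

lemma integral_Phi:
  assumes "n > 0"
  shows "(\<integral>z. poly (Phi n) z \<partial>M) = 0"
proof -
  have "(\<integral>z. cnj (z ^ 0) * poly (Phi n) z \<partial>M) = 0"
    using monic_OP_Phi[of n] assms unfolding monic_OP_def by blast
  then show ?thesis by simp
qed

lemma integral_star_Phi: "(\<integral>z. poly (star_poly n (Phi n)) z \<partial>M) = of_real (Phi_norm2 n)"
  using integral_star_poly[of "Phi n" n 0] monic_OP_top_moment[OF monic_OP_Phi, of n]
  by (simp add: degree_Phi)

lemma integral_z_Phi: "(\<integral>z. z * poly (Phi n) z \<partial>M) = cnj (verblunsky M n) * of_real (Phi_norm2 n)"
proof -
  have "0 = (\<integral>z. poly (Phi (Suc n)) z \<partial>M)" by (simp add: integral_Phi)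
  also have "\<dots> = (\<integral>z. z * poly (Phi n) z \<partial>M) - cnj (verblunsky M n) * of_real (Phi_norm2 n)"
    unfolding poly_Phi_Suc
    by (subst Bochner_Integration.integral_diff)
       (auto intro!: integrable_continuous continuous_intros simp: integral_star_Phi)
  finally show ?thesis by simp
qed

lemma Phi_norm2_Suc: "Phi_norm2 (Suc n) = (1 - (cmod (verblunsky M n))\<^sup>2) * Phi_norm2 n"
proof -
  let ?a = "verblunsky M n"
  have "of_real (Phi_norm2 (Suc n)) = (\<integral>z. cnj (z ^ Suc n) * poly (Phi (Suc n)) z \<partial>M)"
    by (rule monic_OP_top_moment[OF monic_OP_Phi, symmetric])
  also have "\<dots> = (\<integral>z. cnj (z ^ Suc n) * (z * poly (Phi n) z) \<partial>M)
       - cnj ?a * (\<integral>z. cnj (z ^ Suc n) * poly (star_poly n (Phi n)) z \<partial>M)"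
    unfolding poly_Phi_Suc right_diff_distrib
    by (subst Bochner_Integration.integral_diff)
       (auto intro!: integrable_continuous continuous_intros simp: mult.left_commute)
  also have "(\<integral>z. cnj (z ^ Suc n) * (z * poly (Phi n) z) \<partial>M) = of_real (Phi_norm2 n)"
    unfolding integral_shift_unit[OF continuous_on_poly[OF continuous_on_id]]
    by (rule monic_OP_top_moment[OF monic_OP_Phi])
  also have "(\<integral>z. cnj (z ^ Suc n) * poly (star_poly n (Phi n)) z \<partial>M) = ?a * of_real (Phi_norm2 n)"
    using integral_star_poly_top[of "Phi n" n] integral_z_Phi[of n] by (simp add: degree_Phi)
  finally have "of_real (Phi_norm2 (Suc n)) = (1 - cnj ?a * ?a) * of_real (Phi_norm2 n)"
    by (simp add: algebra_simps)
  also have "cnj ?a * ?a = of_real ((cmod ?a)\<^sup>2)"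
    by (metis complex_norm_square mult.commute of_real_power)
  finally have "of_real (Phi_norm2 (Suc n)) = (of_real ((1 - (cmod ?a)\<^sup>2) * Phi_norm2 n) :: complex)"
    by simp
  then show ?thesis by (simp only: of_real_eq_iff)
qed

lemma poly_eq_sum_Phi: "\<exists>b. r = (\<Sum>k\<le>degree r. smult (b k) (Phi k))"
proof -
  have "\<exists>b. r = (\<Sum>k\<le>n. smult (b k) (Phi k))" if "degree r \<le> n" for n
    using that
  proof (induction n arbitrary: r)
    case 0
    then have "r = smult (coeff r 0) (Phi 0)" by (simp add: Phi_0 degree_0_id)
    then show ?case by auto
  next
    case (Suc n)
    let ?r' = "r - smult (coeff r (Suc n)) (Phi (Suc n))"
    have "degree ?r' \<le> n"
    proof (rule degree_le, intro allI impI)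
      fix i
      assume "n < i"
      then consider "i = Suc n" | "i > Suc n" by linarith
      then show "coeff ?r' i = 0"
        using Suc.prems by cases (auto simp: lead_coeff_Phi coeff_eq_0 degree_Phi)
    qed
    then obtain b where b: "?r' = (\<Sum>k\<le>n. smult (b k) (Phi k))" using Suc.IH by blast
    have "r = (\<Sum>k\<le>Suc n. smult ((b(Suc n := coeff r (Suc n))) k) (Phi k))"
      using b by (simp add: algebra_simps)
    then show ?case by blast
  qed
  then show ?thesis by blast
qed

lemma poly_norm2_sum_Phi:
  "poly_norm2 (\<Sum>k\<le>n. smult (b k) (Phi k)) = (\<Sum>k\<le>n. (cmod (b k))\<^sup>2 * Phi_norm2 k)"
proof -
  have "of_real (poly_norm2 (\<Sum>k\<le>n. smult (b k) (Phi k)))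
      = (\<Sum>j\<le>n. \<Sum>k\<le>n. cnj (b j) * (b k * poly_inner (Phi j) (Phi k)))"
    by (simp add: poly_inner_self[symmetric] poly_inner_sum_left poly_inner_sum_right
        poly_inner_smult_left poly_inner_smult_right sum_distrib_left)
       (subst sum.swap, simp add: mult_ac)
  also have "\<dots> = (\<Sum>k\<le>n. cnj (b k) * b k * of_real (Phi_norm2 k))"
    by (simp add: poly_inner_Phi mult.assoc if_distrib[of "\<lambda>x. b _ * x"] if_distrib[of "\<lambda>x. cnj (b _) * x"]
        cong: if_cong)
  also have "\<dots> = of_real (\<Sum>k\<le>n. (cmod (b k))\<^sup>2 * Phi_norm2 k)"
    unfolding of_real_sum by (intro sum.cong refl) (simp add: complex_norm_square[unfolded of_real_power] mult.commute)
  finally show ?thesis by (simp only: of_real_eq_iff)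
qed

text \<open>For a polynomial \<open>p\<close>, \<open>dq_functional a p = a p(1) - \<integral> w (p(w) - p(1)) / (w - 1) d\<mu>(w)\<close>.
  It is defined through the coefficients of \<open>p\<close>, which avoids the removable singularity.\<close>
definition dq_functional :: "complex \<Rightarrow> complex poly \<Rightarrow> complex" where
  "dq_functional a p = (\<Sum>j\<le>degree p. coeff p j * (a - (\<Sum>i=1..j. \<integral>z. z ^ i \<partial>M)))"

lemma dq_functional_eq_sum_atMost:
  assumes "degree p \<le> n"
  shows "dq_functional a p = (\<Sum>j\<le>n. coeff p j * (a - (\<Sum>i=1..j. \<integral>z. z ^ i \<partial>M)))"
  unfolding dq_functional_def
  by (rule sum.mono_neutral_left) (use assms in \<open>auto simp: coeff_eq_0\<close>)

lemma dq_functional_add: "dq_functional a (p + q) = dq_functional a p + dq_functional a q"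
proof -
  let ?n = "max (degree p) (degree q)"
  show ?thesis
    using dq_functional_eq_sum_atMost[of "p + q" ?n a] dq_functional_eq_sum_atMost[of p ?n a]
      dq_functional_eq_sum_atMost[of q ?n a]
    by (simp add: degree_add_le sum.distrib distrib_right)
qed

lemma dq_functional_smult: "dq_functional a (smult b p) = b * dq_functional a p"
  using dq_functional_eq_sum_atMost[of "smult b p" "degree p" a]
  by (simp add: dq_functional_def sum_distrib_left mult.assoc)

lemma dq_functional_diff: "dq_functional a (p - q) = dq_functional a p - dq_functional a q"
  using dq_functional_add[of a p "- q"] dq_functional_smult[of a "- 1" q] by simp

lemma dq_functional_sum: "dq_functional a (\<Sum>k\<in>K. f k) = (\<Sum>k\<in>K. dq_functional a (f k))"
  by (induction K rule: infinite_finite_induct)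
     (simp_all add: dq_functional_add dq_functional_def[of a 0])

lemma dq_functional_1: "dq_functional a 1 = a"
  by (simp add: dq_functional_def)

lemma dq_functional_pCons_0:
  "dq_functional a (pCons 0 r) = dq_functional a r - (\<integral>z. z * poly r z \<partial>M)"
proof -
  let ?n = "degree r" and ?m = "\<lambda>j. \<integral>z. z ^ j \<partial>M"
  have "(\<integral>z. z * poly r z \<partial>M) = (\<integral>z. (\<Sum>j\<le>?n. coeff r j * z ^ Suc j) \<partial>M)"
    by (simp add: poly_altdef sum_distrib_left mult_ac)
  also have "\<dots> = (\<Sum>j\<le>?n. coeff r j * ?m (Suc j))"
    by (subst Bochner_Integration.integral_sum) (auto intro!: integrable_continuous continuous_intros)
  finally have "(\<integral>z. z * poly r z \<partial>M) = (\<Sum>j\<le>?n. coeff r j * ?m (Suc j))" .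
  moreover have "dq_functional a (pCons 0 r) = (\<Sum>j\<le>?n. coeff r j * (a - sum ?m {1..Suc j}))"
    by (simp only: dq_functional_eq_sum_atMost[OF degree_pCons_le] sum.atMost_Suc_shift) simp
  moreover have "\<dots> = dq_functional a r - (\<Sum>j\<le>?n. coeff r j * ?m (Suc j))"
    by (simp add: dq_functional_def sum.cl_ivl_Suc right_diff_distrib distrib_left sum_subtractf sum.distrib)
  ultimately show ?thesis by simp
qed

lemma dq_functional_star_Phi:
  assumes a: "Re a = - 1 / 2"
  shows "dq_functional a (star_poly k (Phi k)) = - cnj (dq_functional a (Phi k)) - of_real (Phi_norm2 k)"
proof (induction k)
  case 0
  have "a = - cnj a - 1" using a by (simp add: complex_eq_iff)
  then show ?case by (simp add: Phi_0 dq_functional_1 poly_norm2_1)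
next
  case (Suc k)
  let ?\<alpha> = "verblunsky M k" and ?L = "dq_functional a (Phi k)" and ?N = "of_real (Phi_norm2 k)"
  have "dq_functional a (star_poly (Suc k) (Phi (Suc k)))
      = dq_functional a (star_poly k (Phi k)) - ?\<alpha> * (?L - cnj ?\<alpha> * ?N)"
    by (subst star_Phi_Suc)
       (simp add: dq_functional_diff dq_functional_smult dq_functional_pCons_0 integral_z_Phi del: smult_pCons)
  moreover have "dq_functional a (Phi (Suc k))
      = ?L - cnj ?\<alpha> * ?N - cnj ?\<alpha> * dq_functional a (star_poly k (Phi k))"
    by (subst Phi_Suc) (simp add: dq_functional_diff dq_functional_smult dq_functional_pCons_0 integral_z_Phi)
  moreover have "of_real ((cmod ?\<alpha>)\<^sup>2) = ?\<alpha> * cnj ?\<alpha>"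
    by (rule complex_norm_square)
  ultimately show ?case
    by (simp add: Suc.IH Phi_norm2_Suc algebra_simps)
qed

lemma dq_functional_Phi_Suc:
  assumes "Re a = - 1 / 2"
  shows "dq_functional a (Phi (Suc k))
       = dq_functional a (Phi k) + cnj (verblunsky M k) * cnj (dq_functional a (Phi k))"
  by (subst Phi_Suc)
     (simp add: dq_functional_diff dq_functional_smult dq_functional_pCons_0 integral_z_Phi
       dq_functional_star_Phi[OF assms] algebra_simps)

text \<open>Bessel's inequality, by Cauchy--Schwarz in the orthogonal basis \<open>Phi\<close>.\<close>
lemma dq_functional_sq_le:
  assumes bound: "\<And>n. (\<Sum>k\<le>n. (cmod (dq_functional a (Phi k)))\<^sup>2 / Phi_norm2 k) \<le> C"
  shows "(cmod (dq_functional a r))\<^sup>2 \<le> C * poly_norm2 r"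
proof -
  define n where "n = degree r"
  obtain b where b: "r = (\<Sum>k\<le>n. smult (b k) (Phi k))"
    unfolding n_def using poly_eq_sum_Phi by blast
  let ?s = "\<lambda>k. sqrt (Phi_norm2 k)" and ?L = "\<lambda>k. cmod (dq_functional a (Phi k))"
  have s: "?s k > 0" "(?s k)\<^sup>2 = Phi_norm2 k" for k
    using Phi_norm2_pos[of k] by auto
  have "cmod (dq_functional a r) \<le> (\<Sum>k\<le>n. cmod (b k) * ?L k)"
    unfolding b by (auto simp: dq_functional_sum dq_functional_smult norm_mult
        intro!: order_trans[OF norm_sum])
  also have "\<dots> = (\<Sum>k\<le>n. (cmod (b k) * ?s k) * (?L k / ?s k))"
    using s(1) by (intro sum.cong refl) (simp add: less_imp_neq[symmetric])
  finally have "(cmod (dq_functional a r))\<^sup>2 \<le> (\<Sum>k\<le>n. (cmod (b k) * ?s k) * (?L k / ?s k))\<^sup>2"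
    by (intro power_mono) auto
  also have "\<dots> \<le> (\<Sum>k\<le>n. (cmod (b k) * ?s k)\<^sup>2) * (\<Sum>k\<le>n. (?L k / ?s k)\<^sup>2)"
    by (rule Cauchy_Schwarz_ineq_sum)
  also have "\<dots> = poly_norm2 r * (\<Sum>k\<le>n. (?L k)\<^sup>2 / Phi_norm2 k)"
    unfolding b poly_norm2_sum_Phi by (simp add: power_mult_distrib power_divide s(2))
  also have "\<dots> \<le> poly_norm2 r * C"
    by (intro mult_left_mono bound poly_norm2_nonneg)
  finally show ?thesis by (simp add: mult.commute)
qed

lemma dq_functional_half_power_quot_Suc:
  "dq_functional a (half_power_quot (Suc n))
     = (a + 2 * dq_functional a (half_power_quot n) - (\<integral>z. z * poly (half_power_quot n) z \<partial>M)) / 2"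
proof -
  have "half_power_quot (Suc n) = smult (1/2) (1 + half_power_quot n + pCons 0 (half_power_quot n))"
    by (simp add: half_power_quot.simps add.assoc)
  then show ?thesis by (simp add: dq_functional_smult dq_functional_add dq_functional_1 dq_functional_pCons_0)
qed

lemma poly_norm2_half_power_Suc:
  "poly_norm2 ([:1/2, 1/2:] ^ n) + 4 * poly_norm2 (half_power_quot (Suc n))
     = 2 + 4 * Re (\<integral>z. z * poly (half_power_quot n) z \<partial>M) + 4 * poly_norm2 (half_power_quot n)"
proof -
  let ?r = "poly (half_power_quot n)"
  have "4 * poly_norm2 (half_power_quot (Suc n)) = (\<integral>z. (cmod (1 + (1 + z) * ?r z))\<^sup>2 \<partial>M)"
    unfolding poly_norm2_def poly_half_power_quot_Suc by (simp add: norm_divide power_divide)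
  then have "poly_norm2 ([:1/2, 1/2:] ^ n) + 4 * poly_norm2 (half_power_quot (Suc n))
      = (\<integral>z. (cmod (1 + (z - 1) * ?r z))\<^sup>2 + (cmod (1 + (1 + z) * ?r z))\<^sup>2 \<partial>M)"
    unfolding poly_norm2_def poly_half_power_eq_quot
    by (subst Bochner_Integration.integral_add) (auto intro!: integrable_continuous continuous_intros)
  also have "\<dots> = (\<integral>z. 2 + 4 * Re (z * ?r z) + 4 * (cmod (?r z))\<^sup>2 \<partial>M)"
    by (intro integral_cong_unit norm2_half_power_step) (auto intro!: continuous_intros)
  also have "\<dots> = (\<integral>z. 2 + 4 * Re (z * ?r z) \<partial>M) + 4 * poly_norm2 (half_power_quot n)"
    unfolding poly_norm2_def
    by (subst Bochner_Integration.integral_add) (auto intro!: integrable_continuous continuous_intros)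
  also have "(\<integral>z. 2 + 4 * Re (z * ?r z) \<partial>M) = 2 + 4 * Re (\<integral>z. z * ?r z \<partial>M)"
  proof -
    have "(\<integral>z. 2 + 4 * Re (z * ?r z) \<partial>M) = (\<integral>z. 2 \<partial>M) + (\<integral>z. 4 * Re (z * ?r z) \<partial>M)"
      by (rule Bochner_Integration.integral_add) (auto intro!: integrable_continuous continuous_intros)
    moreover have "(\<integral>z. 4 * Re (z * ?r z) \<partial>M) = 4 * Re (\<integral>z. z * ?r z \<partial>M)"
      by (subst integral_Re[symmetric], (auto intro!: integrable_continuous continuous_intros)[1])
         (rule integral_mult_right_zero)
    ultimately show ?thesis by (simp add: P.prob_space)
  qed
  finally show ?thesis by simp
qed

text \<open>The partial sums of \<open>\<Sum>\<^sub>k \<parallel>((1 + z) / 2)\<^sup>k\<parallel>\<^sup>2\<close> telescope into a value of the functional.\<close>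
lemma sum_poly_norm2_half_power:
  assumes "Re a = - 1 / 2"
  shows "(\<Sum>k<n. poly_norm2 ([:1/2, 1/2:] ^ k))
       = 4 * (- 2 * Re (dq_functional a (half_power_quot n)) - poly_norm2 (half_power_quot n))"
proof (induction n)
  case 0
  then show ?case by (simp add: poly_norm2_def dq_functional_def)
next
  case (Suc n)
  then show ?case
    using poly_norm2_half_power_Suc[of n] assms
    by (simp add: dq_functional_half_power_quot_Suc field_simps)
qed

lemma sum_poly_norm2_half_power_le:
  assumes a: "Re a = - 1 / 2"
    and bound: "\<And>r. (cmod (dq_functional a r))\<^sup>2 \<le> C * poly_norm2 r"
  shows "(\<Sum>k<n. poly_norm2 ([:1/2, 1/2:] ^ k) / 4) \<le> C"
proof -
  let ?L = "dq_functional a (half_power_quot n)" and ?t = "poly_norm2 (half_power_quot n)"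
  have C: "0 \<le> C"
    using order_trans[OF zero_le_power2 bound[of 1]] by (simp add: poly_norm2_1)
  have "(2 * cmod ?L)\<^sup>2 \<le> 4 * (C * ?t)"
    using bound[of "half_power_quot n"] by (simp add: power_mult_distrib)
  also have "\<dots> \<le> (C + ?t)\<^sup>2"
    using zero_le_power2[of "C - ?t"] unfolding power2_diff power2_sum by linarith
  finally have "2 * cmod ?L \<le> C + ?t"
    by (rule power2_le_imp_le) (use C poly_norm2_nonneg[of "half_power_quot n"] in simp)
  moreover have "(\<Sum>k<n. poly_norm2 ([:1/2, 1/2:] ^ k) / 4) = - 2 * Re ?L - ?t"
    unfolding sum_divide_distrib[symmetric] sum_poly_norm2_half_power[OF a] by simp
  ultimately show ?thesis using abs_le_D2[OF abs_Re_le_cmod[of ?L]] by linarith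
qed

lemma nn_integral_inverse_dist_sq_one_le:
  assumes a: "Re a = - 1 / 2"
    and bound: "\<And>r. (cmod (dq_functional a r))\<^sup>2 \<le> C * poly_norm2 r"
  shows "(\<integral>\<^sup>+ z. (if z = 1 then \<infinity> else ennreal (1 / (cmod (z - 1))\<^sup>2)) \<partial>M) \<le> ennreal C"
proof -
  define h :: "nat \<Rightarrow> complex poly" where "h k = [:1/2, 1/2:] ^ k" for k
  define f where "f k z = ennreal ((cmod (poly (h k) z))\<^sup>2 / 4)" for k z
  have "AE z in M. (if z = 1 then \<infinity> else ennreal (1 / (cmod (z - 1))\<^sup>2)) = (\<Sum>k. f k z)"
    using AE_unit
  proof eventually_elim
    case (elim z)
    have "poly (h k) z = ((1 + z) / 2) ^ k" for k
      by (simp add: h_def poly_power field_simps)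
    then show ?case by (simp only: f_def norm_power inverse_dist_sq_one_eq_suminf[OF elim])
  qed
  then have "(\<integral>\<^sup>+ z. (if z = 1 then \<infinity> else ennreal (1 / (cmod (z - 1))\<^sup>2)) \<partial>M) = (\<integral>\<^sup>+ z. (\<Sum>k. f k z) \<partial>M)"
    by (rule nn_integral_cong_AE)
  also have "\<dots> = (\<Sum>k. integral\<^sup>N M (f k))"
    unfolding f_def
    by (intro nn_integral_suminf measurable_compose[OF borel_measurable_continuous measurable_ennreal])
       (auto intro!: continuous_intros)
  also have "\<dots> = (\<Sum>k. ennreal (poly_norm2 (h k) / 4))"
    unfolding f_def poly_norm2_def
    by (subst nn_integral_eq_integral) (auto intro!: integrable_continuous continuous_intros)
  also have "\<dots> \<le> ennreal C"
    unfolding suminf_eq_SUP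
  proof (rule SUP_least)
    fix n
    have "(\<Sum>k<n. ennreal (poly_norm2 (h k) / 4)) = ennreal (\<Sum>k<n. poly_norm2 (h k) / 4)"
      by (rule sum_ennreal) (simp add: poly_norm2_nonneg)
    then show "(\<Sum>k<n. ennreal (poly_norm2 (h k) / 4)) \<le> ennreal C"
      using sum_poly_norm2_half_power_le[OF a bound, of n] by (simp add: h_def ennreal_leI)
  qed
  finally show ?thesis .
qed

end

section \<open>Chain sequences\<close>

lemma minimal_param_seqD:
  assumes "minimal_param_seq d l"
  shows minimal_param_seq_1: "l 1 = 0"
    and minimal_param_seq_pos: "n \<ge> 2 \<Longrightarrow> 0 < l n"
    and minimal_param_seq_less_1: "n \<ge> 1 \<Longrightarrow> l n < 1"
    and minimal_param_seq_chain: "n \<ge> 1 \<Longrightarrow> d (n + 1) = (1 - l n) * l (n + 1)"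
proof -
  have l: "param_seq d l" "l 1 = 0" using assms unfolding minimal_param_seq_def by auto
  then show "l 1 = 0" "n \<ge> 2 \<Longrightarrow> 0 < l n" "n \<ge> 1 \<Longrightarrow> d (n + 1) = (1 - l n) * l (n + 1)"
    unfolding param_seq_def by auto
  show "n \<ge> 1 \<Longrightarrow> l n < 1" using l unfolding param_seq_def by (cases "n = 1") auto
qed

lemma param_seq_eq_minimal:
  assumes l: "minimal_param_seq d l" and g: "param_seq d g" "g 1 = 0" and "n \<ge> 1"
  shows "g n = l n"
  using \<open>n \<ge> 1\<close>
proof (induction n rule: dec_induct)
  case base
  then show ?case using g(2) minimal_param_seq_1[OF l] by simp
next
  case (step n)
  have "(1 - g n) * g (n + 1) = (1 - l n) * l (n + 1)"
    using g step.hyps minimal_param_seq_chain[OF l] unfolding param_seq_def by auto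
  moreover have "1 - l n \<noteq> 0" using minimal_param_seq_less_1[OF l step.hyps(1)] by simp
  ultimately show ?case using step.IH by simp
qed

lemma multiple_param_seqs_pos_start:
  assumes "minimal_param_seq d l" "multiple_param_seqs d"
  obtains H where "param_seq d H" "H 1 > 0"
proof -
  obtain g h n where g: "param_seq d g" and h: "param_seq d h" and n: "n \<ge> 1" "g n \<noteq> h n"
    using assms(2) unfolding multiple_param_seqs_def by auto
  then have "g 1 \<noteq> 0 \<or> h 1 \<noteq> 0"
    using param_seq_eq_minimal[OF assms(1)] by metis
  moreover have "g 1 \<ge> 0" "h 1 \<ge> 0" using g h unfolding param_seq_def by auto
  ultimately show ?thesis using g h that by (metis less_eq_real_def)
qed

lemma param_seq_gt_minimal:
  assumes l: "minimal_param_seq d l" and H: "param_seq d H" "H 1 > 0" and "j \<ge> 1"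
  shows "l j < H j"
  using \<open>j \<ge> 1\<close>
proof (induction j rule: dec_induct)
  case base
  then show ?case using H(2) minimal_param_seq_1[OF l] by simp
next
  case (step j)
  have "(1 - H j) * H (j + 1) = (1 - l j) * l (j + 1)"
    using H(1) step.hyps(1) minimal_param_seq_chain[OF l step.hyps(1)] unfolding param_seq_def by auto
  then have "(H (j + 1) - l (j + 1)) * (1 - H j) = l (j + 1) * (H j - l j)"
    by (simp add: algebra_simps)
  moreover have "l (j + 1) * (H j - l j) > 0"
    using minimal_param_seq_pos[OF l, of "j + 1"] step by simp
  moreover have "1 - H j > 0"
    using H(1) step.hyps(1) unfolding param_seq_def by (cases "j = 1") auto
  ultimately show ?case by (metis Suc_eq_plus1 diff_gt_0_iff_gt zero_less_mult_pos2)
qed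

text \<open>With \<open>e\<^sub>j = H\<^sub>j - l\<^sub>j > 0\<close> the chain relations give \<open>(1 - l\<^sub>j) / e\<^sub>j = 1 + l\<^sub>j\<^sub>+\<^sub>1 / e\<^sub>j\<^sub>+\<^sub>1\<close>;
  iterating this writes \<open>1 / H\<^sub>1\<close> as the partial sum plus a nonnegative remainder.\<close>
lemma minimal_param_seq_sum_le:
  assumes l: "minimal_param_seq d l" and H: "param_seq d H" "H 1 > 0"
  shows "(\<Sum>k<n. \<Prod>j=2..k+1. l j / (1 - l j)) \<le> 1 / H 1"
proof -
  define e where "e j = H j - l j" for j
  define w where "w k = (\<Prod>j=2..k+1. l j / (1 - l j))" for k
  have epos: "e j > 0" if "j \<ge> 1" for j
    using param_seq_gt_minimal[OF l H that] by (simp add: e_def)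
  have chain: "(1 - H j) * H (j + 1) = (1 - l j) * l (j + 1)" if "j \<ge> 1" for j
    using H(1) that minimal_param_seq_chain[OF l that] unfolding param_seq_def by auto
  have e_step: "(1 - l j) / e j = 1 + l (j + 1) / e (j + 1)" if "j \<ge> 1" for j
    using chain[OF that] epos[OF that] epos[of "j + 1"] that unfolding e_def
    by (simp add: field_simps)
  have w_Suc: "w (Suc k) = w k * (l (k + 2) / (1 - l (k + 2)))" for k
    by (simp add: w_def prod.cl_ivl_Suc numeral_2_eq_2)
  have telescope: "1 / e 1 = (\<Sum>k<n. w k) + w n * (1 - l (n + 1)) / e (n + 1)" for n
  proof (induction n)
    case 0
    then show ?case using minimal_param_seq_1[OF l] by (simp add: w_def)
  next
    case (Suc n)
    have "1 - l (n + 2) \<noteq> 0" using minimal_param_seq_less_1[OF l, of "n + 2"] by simp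
    then have rest: "w (Suc n) * (1 - l (Suc n + 1)) / e (Suc n + 1) = w n * l (n + 2) / e (n + 2)"
      by (simp add: w_Suc)
    have "w n * (1 - l (n + 1)) / e (n + 1) = w n * ((1 - l (n + 1)) / e (n + 1))"
      by simp
    also have "\<dots> = w n * (1 + l (n + 2) / e (n + 2))"
      by (subst e_step) (simp_all add: numeral_2_eq_2)
    also have "\<dots> = w n + w n * l (n + 2) / e (n + 2)"
      by (simp add: distrib_left)
    finally show ?case unfolding rest sum.lessThan_Suc using Suc.IH by simp
  qed
  have "0 \<le> w n * (1 - l (n + 1)) / e (n + 1)"
    using minimal_param_seq_pos[OF l] minimal_param_seq_less_1[OF l] epos[of "n + 1"]
    by (auto simp: w_def less_imp_le intro!: divide_nonneg_pos mult_nonneg_nonneg prod_nonneg)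
  then show ?thesis
    using telescope[of n] minimal_param_seq_1[OF l] by (simp add: e_def w_def)
qed

section \<open>Verblunsky coefficients built from a chain sequence\<close>

lemma one_add_i_of_real_ne_0: "1 + \<i> * complex_of_real x \<noteq> 0"
  and one_diff_i_of_real_ne_0: "1 - \<i> * complex_of_real x \<noteq> 0"
  by (auto simp: complex_eq_iff)

locale chain_verblunsky = circle_measure +
  fixes c d l :: "nat \<Rightarrow> real"
  assumes minimal: "minimal_param_seq d l"
    and verblunsky_tau: "\<And>n. n \<ge> 1 \<Longrightarrow> verblunsky M (n - 1) =
        - (1 / tau c n) * ((1 - 2 * of_real (l (n+1)) - \<i> * of_real (c (n+1)))
                          / (1 - \<i> * of_real (c (n+1))))"
begin

definition cprod :: "nat \<Rightarrow> complex" where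
  "cprod n = (\<Prod>j=1..n. 1 + \<i> * of_real (c j))"

lemma cprod_ne_0: "cprod n \<noteq> 0"
  unfolding cprod_def using one_add_i_of_real_ne_0 by (auto simp: prod_zero_iff)

lemma cprod_Suc: "cprod (Suc n) = cprod n * (1 + \<i> * of_real (c (Suc n)))"
  unfolding cprod_def by (simp add: prod.cl_ivl_Suc)

lemma cnj_cprod: "cnj (cprod n) = (\<Prod>j=1..n. 1 - \<i> * of_real (c j))"
  unfolding cprod_def by (induction n) (simp_all add: prod.cl_ivl_Suc)

lemma tau_eq: "tau c n = cnj (cprod n) / cprod n"
proof (induction n)
  case (Suc n)
  then show ?case
    using cprod_ne_0[of n] one_add_i_of_real_ne_0[of "c (Suc n)"]
    by (simp add: cprod_Suc cnj_cprod prod.cl_ivl_Suc)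
qed (simp add: cprod_def)

lemma verblunsky_eq: "verblunsky M m = - (cprod (m + 1) / cnj (cprod (m + 1)))
    * ((1 - 2 * of_real (l (m + 2)) - \<i> * of_real (c (m + 2))) / (1 - \<i> * of_real (c (m + 2))))"
  using verblunsky_tau[of "m + 1"] by (simp add: tau_eq del: tau.simps)

lemma cnj_verblunsky_eq: "cnj (verblunsky M m) = - (cnj (cprod (m + 1)) / cprod (m + 1))
    * ((1 - 2 * of_real (l (m + 2)) + \<i> * of_real (c (m + 2))) / (1 + \<i> * of_real (c (m + 2))))"
  by (simp add: verblunsky_eq)

lemma norm_verblunsky:
  "1 - (cmod (verblunsky M m))\<^sup>2 = 4 * l (m + 2) * (1 - l (m + 2)) / (1 + (c (m + 2))\<^sup>2)"
proof -
  let ?u = "1 - 2 * complex_of_real (l (m + 2)) - \<i> * of_real (c (m + 2))"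
  let ?v = "1 - \<i> * complex_of_real (c (m + 2))"
  have "cmod (verblunsky M m) = cmod ?u / cmod ?v"
    unfolding verblunsky_eq using cprod_ne_0[of "m + 1"]
    by (simp add: norm_mult norm_divide del: of_real_mult)
  then have "(cmod (verblunsky M m))\<^sup>2 = ((1 - 2 * l (m + 2))\<^sup>2 + (c (m + 2))\<^sup>2) / (1 + (c (m + 2))\<^sup>2)"
    by (simp add: power_divide cmod_power2)
  moreover have "1 + (c (m + 2))\<^sup>2 > 0" by (simp add: add_pos_nonneg)
  ultimately show ?thesis by (simp add: field_simps power2_eq_square)
qed

text \<open>\<open>Qn m \<i>\<close> and \<open>Qn m (- \<i>)\<close> are the bracket in the closed forms of \<open>Phi m\<close> and of its reversal.\<close>
definition Qn :: "nat \<Rightarrow> complex \<Rightarrow> complex \<Rightarrow> complex" where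
  "Qn m w x = Pn c d (m + 1) x - of_real (1 - l (m + 1)) * (x - w) * Pn c d m x"

text \<open>The three-term recurrence of the \<open>Pn\<close> becomes a Szeg\H{o}-type recurrence for \<open>Qn\<close>, using
  \<open>d\<^sub>m\<^sub>+\<^sub>2 (x\<^sup>2 + 1) = (1 - l\<^sub>m\<^sub>+\<^sub>1) l\<^sub>m\<^sub>+\<^sub>2 (x - w) (x + w)\<close>.\<close>
lemma Qn_Suc:
  assumes "w = \<i> \<or> w = - \<i>"
  shows "2 * Qn (Suc m) w x = (1 + w * of_real (c (m + 2))) * (x + w) * Qn m w x
           - (1 - 2 * of_real (l (m + 2)) + w * of_real (c (m + 2))) * (x - w) * Qn m (- w) x"
proof -
  have "d (m + 2) = (1 - l (m + 1)) * l (m + 2)"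
    using minimal_param_seq_chain[OF minimal, of "m + 1"] by (simp add: numeral_2_eq_2)
  then have P: "Pn c d (Suc m + 1) x = (x - of_real (c (m + 2))) * Pn c d (m + 1) x
      - of_real ((1 - l (m + 1)) * l (m + 2)) * (x\<^sup>2 + 1) * Pn c d m x"
    by (simp add: numeral_2_eq_2)
  from assms show ?thesis
    unfolding Qn_def P by (auto simp: algebra_simps power2_eq_square)
qed

lemma cayley_inverse:
  assumes "\<zeta> \<noteq> 1"
  defines "x \<equiv> \<i> * (\<zeta> + 1) / (\<zeta> - 1)"
  shows "x - \<i> \<noteq> 0" and "\<zeta> = (x + \<i>) / (x - \<i>)"
proof -
  have z: "\<zeta> - 1 \<noteq> 0" using assms(1) by simp
  have e1: "x - \<i> = 2 * \<i> / (\<zeta> - 1)" and e2: "x + \<i> = 2 * \<i> * \<zeta> / (\<zeta> - 1)"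
    using z unfolding x_def by (simp_all add: field_simps)
  show "x - \<i> \<noteq> 0" using e1 z by simp
  show "\<zeta> = (x + \<i>) / (x - \<i>)" unfolding e1 e2 using z by (simp add: field_simps)
qed

lemma poly_Phi_star_closed_form:
  assumes "\<zeta> \<noteq> 1"
  defines "x \<equiv> \<i> * (\<zeta> + 1) / (\<zeta> - 1)"
  shows "poly (Phi m) \<zeta> = - \<i> * 2 ^ m / cprod (m + 1) / (x - \<i>) ^ m * Qn m \<i> x
       \<and> poly (star_poly m (Phi m)) \<zeta> = \<i> * 2 ^ m / cnj (cprod (m + 1)) / (x - \<i>) ^ m * Qn m (- \<i>) x"
proof (induction m)
  case 0
  have "cprod 1 = 1 + \<i> * of_real (c 1)" by (simp add: cprod_def)
  then show ?case
    using one_add_i_of_real_ne_0[of "c 1"] one_diff_i_of_real_ne_0[of "c 1"]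
      minimal_param_seq_1[OF minimal]
    by (simp add: Phi_0 Qn_def field_simps)
next
  case (Suc m)
  note x = cayley_inverse[OF assms(1), folded x_def]
  let ?E = "(x - \<i>) ^ m" and ?P = "cprod (m + 1)" and ?c = "complex_of_real (c (m + 2))"
    and ?l = "complex_of_real (l (m + 2))"
  define v u v' u' where "v = 1 + \<i> * ?c" and "u = 1 - 2 * ?l + \<i> * ?c"
    and "v' = 1 - \<i> * ?c" and "u' = 1 - 2 * ?l - \<i> * ?c"
  have ne: "?E \<noteq> 0" "?P \<noteq> 0" "cnj ?P \<noteq> 0" "v \<noteq> 0" "v' \<noteq> 0"
    using x(1) cprod_ne_0[of "m + 1"] one_add_i_of_real_ne_0 one_diff_i_of_real_ne_0
    by (auto simp: v_def v'_def)
  have cnj_uv: "cnj v = v'" "cnj v' = v" "cnj u = u'" "cnj u' = u"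
    by (simp_all add: u_def v_def u'_def v'_def)
  have P: "cprod (Suc m + 1) = ?P * v" "cnj (cprod (Suc m + 1)) = cnj ?P * v'"
    using cprod_Suc[of "m + 1"] by (simp_all add: v_def v'_def numeral_2_eq_2)
  have \<alpha>: "verblunsky M m = - (?P / cnj ?P) * (u' / v')"
    and c\<alpha>: "cnj (verblunsky M m) = - (cnj ?P / ?P) * (u / v)"
    by (simp_all add: verblunsky_eq cnj_verblunsky_eq u_def v_def u'_def v'_def)
  have Q: "Qn (Suc m) \<i> x = (v * (x + \<i>) * Qn m \<i> x - u * (x - \<i>) * Qn m (- \<i>) x) / 2"
    and Q': "Qn (Suc m) (- \<i>) x = (v' * (x - \<i>) * Qn m (- \<i>) x - u' * (x + \<i>) * Qn m \<i> x) / 2"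
    using Qn_Suc[of \<i> m x] Qn_Suc[of "- \<i>" m x]
    by (simp_all add: u_def v_def u'_def v'_def eq_divide_eq mult.commute[of _ 2])
  show ?case
    unfolding poly_Phi_Suc poly_star_Phi_Suc Suc.IH[THEN conjunct1] Suc.IH[THEN conjunct2] \<alpha> c\<alpha> P Q Q'
    using ne x(1) by (subst (1 2) x(2)) (simp add: cnj_uv field_simps)
qed

lemma poly_Phi_closed_form:
  assumes "k \<ge> 1" "\<zeta> \<noteq> 1"
  shows "let x = \<i> * (\<zeta> + 1) / (\<zeta> - 1) in
           poly (Phi (k - 1)) \<zeta> =
             (- \<i> * 2 ^ (k - 1) / (\<Prod>j=1..k. 1 + \<i> * of_real (c j)))
             * (1 / (x - \<i>) ^ (k - 1))
             * (Pn c d k x - of_real (1 - l k) * (x - \<i>) * Pn c d (k - 1) x)"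
proof -
  obtain m where "k = Suc m" using assms(1) by (cases k) auto
  with poly_Phi_star_closed_form[OF assms(2), of m] show ?thesis
    by (simp add: Let_def Qn_def cprod_def)
qed

lemma Phi_norm2_eq: "Phi_norm2 k = (1 + (c 1)\<^sup>2) * 2 ^ (2 * k) * (\<Prod>j=1..k+1. d (j+1))
    / (l (k + 2) * (\<Prod>j=1..k+1. 1 + (c j)\<^sup>2))"
proof (induction k)
  case 0
  have "d 2 = l 2" "l 2 > 0"
    using minimal_param_seq_chain[OF minimal, of 1] minimal_param_seq_pos[OF minimal, of 2]
      minimal_param_seq_1[OF minimal] by (simp_all add: numeral_2_eq_2)
  moreover have "1 + (c 1)\<^sup>2 > 0" by (simp add: add_pos_nonneg)
  ultimately show ?case by (simp add: Phi_0 poly_norm2_1 numeral_2_eq_2)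
next
  case (Suc k)
  define D C where "D = (\<Prod>j=1..k+1. d (j+1))" and "C = (\<Prod>j=1..k+1. 1 + (c j)\<^sup>2)"
  define a b w where "a = l (k + 2)" and "b = l (Suc k + 2)" and "w = 1 + (c (k + 2))\<^sup>2"
  have D: "(\<Prod>j=1..Suc k+1. d (j+1)) = D * ((1 - a) * b)"
    using minimal_param_seq_chain[OF minimal, of "k + 2"]
    by (simp add: D_def a_def b_def prod.cl_ivl_Suc numeral_3_eq_3)
  have C: "(\<Prod>j=1..Suc k+1. 1 + (c j)\<^sup>2) = C * w"
    by (simp add: C_def w_def numeral_2_eq_2 del: prod.cl_ivl_Suc) (simp add: prod.cl_ivl_Suc)
  have pos: "a > 0" "b > 0" "w > 0" "C > 0"
    using minimal_param_seq_pos[OF minimal, of "k + 2"] minimal_param_seq_pos[OF minimal, of "Suc k + 2"]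
    by (auto simp: a_def b_def w_def C_def intro!: prod_pos add_pos_nonneg simp del: prod.cl_ivl_Suc)
  have "(2::real) ^ (2 * Suc k) = 2 ^ (2 * k) * 4" by (simp add: power_add)
  then show ?case
    unfolding Phi_norm2_Suc norm_verblunsky Suc.IH[folded D_def C_def] D C
      a_def[symmetric] b_def[symmetric] w_def[symmetric]
    using pos by (simp add: field_simps)
qed

lemma integral_cnj_Phi_mult_Phi:
  "(\<integral>\<zeta>. cnj (poly (Phi m) \<zeta>) * poly (Phi k) \<zeta> \<partial>M) =
     (if m = k then
        of_real ((1 + (c 1)^2) * 2 ^ (2 * k) * (\<Prod>j=1..k+1. d (j+1))
                 / (l (k+2) * (\<Prod>j=1..k+1. 1 + (c j)^2)))
      else 0)"
  using poly_inner_Phi[of m k] unfolding poly_inner_def Phi_norm2_eq .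

text \<open>The real part \<open>-1/2\<close> of the base point is what \<open>dq_functional_star_Phi\<close> needs; its imaginary
  part makes \<open>L (Phi k) * cprod (k + 1)\<close> real.\<close>
abbreviation L :: "complex poly \<Rightarrow> complex" where
  "L \<equiv> dq_functional (- (1 - \<i> * of_real (c 1)) / 2)"

lemma L_Phi_mult_cprod:
  "L (Phi k) * cprod (k + 1) = - of_real ((1 + (c 1)\<^sup>2) * 2 ^ k * (\<Prod>j=2..k+1. l j) / 2)"
proof (induction k)
  case 0
  have "cprod 1 = 1 + \<i> * of_real (c 1)" by (simp add: cprod_def)
  then show ?case by (simp add: Phi_0 dq_functional_1 field_simps power2_eq_square)
next
  case (Suc k)
  define r where "r = (1 + (c 1)\<^sup>2) * 2 ^ k * (\<Prod>j=2..k+1. l j) / 2"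
  let ?P = "cprod (k + 1)" and ?c = "complex_of_real (c (k + 2))"
  define v u where "v = 1 + \<i> * ?c" and "u = 1 - 2 * complex_of_real (l (k + 2)) + \<i> * ?c"
  have ne: "?P \<noteq> 0" "cnj ?P \<noteq> 0" "v \<noteq> 0"
    using cprod_ne_0[of "k + 1"] one_add_i_of_real_ne_0 by (auto simp: v_def)
  have IH: "L (Phi k) * ?P = - of_real r" using Suc.IH by (simp add: r_def)
  have Lk: "L (Phi k) = - of_real r / ?P" using IH ne by (simp add: field_simps)
  have cLk: "cnj (L (Phi k)) = - of_real r / cnj ?P"
    using arg_cong[OF IH, of cnj] ne by (simp add: field_simps)
  have L_Suc: "L (Phi (Suc k)) = L (Phi k) + cnj (verblunsky M k) * cnj (L (Phi k))"
    by (rule dq_functional_Phi_Suc) simp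
  have c\<alpha>: "cnj (verblunsky M k) = - (cnj ?P / ?P) * (u / v)"
    by (simp add: cnj_verblunsky_eq u_def v_def)
  have P: "cprod (Suc k + 1) = ?P * v"
    using cprod_Suc[of "k + 1"] by (simp add: v_def numeral_2_eq_2)
  have r: "(1 + (c 1)\<^sup>2) * 2 ^ Suc k * (\<Prod>j=2..Suc k+1. l j) / 2 = r * (2 * l (k + 2))"
    by (simp add: r_def prod.cl_ivl_Suc numeral_2_eq_2)
  have u: "u = v - 2 * of_real (l (k + 2))" by (simp add: u_def v_def)
  show ?case
    unfolding L_Suc Lk cLk c\<alpha> P r u using ne by (simp add: field_simps)
qed

lemma L_Phi_Suc: "L (Phi (Suc k)) = L (Phi k) * (2 * of_real (l (k + 2)) / (1 + \<i> * of_real (c (k + 2))))"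
proof -
  define v where "v = 1 + \<i> * complex_of_real (c (k + 2))"
  have ne: "cprod (k + 1) \<noteq> 0" "v \<noteq> 0"
    using cprod_ne_0 one_add_i_of_real_ne_0 by (auto simp: v_def)
  have "L (Phi (Suc k)) * (cprod (k + 1) * v) = L (Phi k) * cprod (k + 1) * (2 * of_real (l (k + 2)))"
    using L_Phi_mult_cprod[of "Suc k"] L_Phi_mult_cprod[of k] cprod_Suc[of "k + 1"]
    by (simp add: v_def prod.cl_ivl_Suc numeral_2_eq_2 mult_ac)
  then show ?thesis unfolding v_def[symmetric] using ne by (simp add: field_simps)
qed

lemma L_Phi_ratio:
  "(cmod (L (Phi k)))\<^sup>2 / Phi_norm2 k = (1 + (c 1)\<^sup>2) / 4 * (\<Prod>j=2..k+1. l j / (1 - l j))"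
proof (induction k)
  case 0
  have "(cmod (- (1 - \<i> * complex_of_real (c 1)) / 2))\<^sup>2 = (1 + (c 1)\<^sup>2) / 4"
    by (simp add: cmod_power2 power_divide)
  then show ?case by (simp add: Phi_0 dq_functional_1 poly_norm2_1)
next
  case (Suc k)
  define a w where "a = l (k + 2)" and "w = 1 + (c (k + 2))\<^sup>2"
  have pos: "0 < a" "a < 1" "0 < w" "0 < Phi_norm2 k"
    using minimal_param_seq_pos[OF minimal, of "k + 2"] minimal_param_seq_less_1[OF minimal, of "k + 2"]
      Phi_norm2_pos by (auto simp: a_def w_def intro: add_pos_nonneg)
  have "(cmod (L (Phi (Suc k))))\<^sup>2 = (cmod (L (Phi k)))\<^sup>2 * (4 * a\<^sup>2 / w)"
    unfolding L_Phi_Suc norm_mult norm_divide using pos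
    by (simp add: a_def w_def power_mult_distrib power_divide cmod_power2)
  then have "(cmod (L (Phi (Suc k))))\<^sup>2 / Phi_norm2 (Suc k)
      = (cmod (L (Phi k)))\<^sup>2 / Phi_norm2 k * (a / (1 - a))"
    unfolding Phi_norm2_Suc norm_verblunsky a_def[symmetric] w_def[symmetric]
    using pos by (simp add: field_simps power2_eq_square)
  then show ?case
    unfolding Suc.IH by (simp add: a_def prod.cl_ivl_Suc numeral_2_eq_2)
qed

lemma L_sq_le:
  assumes H: "param_seq d H" "H 1 > 0"
  shows "(cmod (L r))\<^sup>2 \<le> (1 + (c 1)\<^sup>2) / (4 * H 1) * poly_norm2 r"
proof (rule dq_functional_sq_le)
  fix n
  have "(\<Sum>k\<le>n. (cmod (L (Phi k)))\<^sup>2 / Phi_norm2 k)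
      = (1 + (c 1)\<^sup>2) / 4 * (\<Sum>k<Suc n. \<Prod>j=2..k+1. l j / (1 - l j))"
    unfolding L_Phi_ratio by (simp add: sum_distrib_left lessThan_Suc_atMost del: prod.cl_ivl_Suc)
  also have "\<dots> \<le> (1 + (c 1)\<^sup>2) / 4 * (1 / H 1)"
    using minimal_param_seq_sum_le[OF minimal H] by (rule mult_left_mono) simp
  finally show "(\<Sum>k\<le>n. (cmod (L (Phi k)))\<^sup>2 / Phi_norm2 k) \<le> (1 + (c 1)\<^sup>2) / (4 * H 1)"
    by simp
qed

lemma nn_integral_inverse_dist_sq_one_finite:
  assumes "multiple_param_seqs d"
  shows "(\<integral>\<^sup>+ z. (if z = 1 then \<infinity> else ennreal (1 / (cmod (z - 1))\<^sup>2)) \<partial>M) < \<infinity>"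
proof -
  obtain H where H: "param_seq d H" "H 1 > 0"
    using multiple_param_seqs_pos_start[OF minimal assms] .
  have "(\<integral>\<^sup>+ z. (if z = 1 then \<infinity> else ennreal (1 / (cmod (z - 1))\<^sup>2)) \<partial>M)
      \<le> ennreal ((1 + (c 1)\<^sup>2) / (4 * H 1))"
    by (rule nn_integral_inverse_dist_sq_one_le[OF _ L_sq_le[OF H]]) simp
  then show ?thesis by (simp add: le_less_trans)
qed

end

theorem theorem3p2:
  fixes c d l :: "nat \<Rightarrow> real" and \<mu> :: "complex measure"
  assumes chain: "positive_chain_seq d"
    and minl: "minimal_param_seq d l"
    and mu: "nontrivial_prob_on_circle \<mu>"
    and verb: "\<And>n. n \<ge> 1 \<Longrightarrow> verblunsky \<mu> (n - 1) =
        - (1 / tau c n) * ((1 - 2 * of_real (l (n+1)) - \<i> * of_real (c (n+1)))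
                          / (1 - \<i> * of_real (c (n+1))))"
  shows "(\<exists>\<Phi>. monic_OPs \<mu> \<Phi> \<and>
           (\<forall>k\<ge>1. \<forall>\<zeta>. \<zeta> \<noteq> 1 \<longrightarrow>
              (let x = \<i> * (\<zeta> + 1) / (\<zeta> - 1) in
               poly (\<Phi> (k - 1)) \<zeta> =
                 (- \<i> * 2 ^ (k - 1) / (\<Prod>j=1..k. 1 + \<i> * of_real (c j)))
                 * (1 / (x - \<i>) ^ (k - 1))
                 * (Pn c d k x - of_real (1 - l k) * (x - \<i>) * Pn c d (k - 1) x))) \<and>
           (\<forall>m k. integral\<^sup>L \<mu> (\<lambda>\<zeta>. cnj (poly (\<Phi> m) \<zeta>) * poly (\<Phi> k) \<zeta>) =
              (if m = k then
                 of_real ((1 + (c 1)^2) * 2 ^ (2 * k) * (\<Prod>j=1..k+1. d (j+1))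
                          / (l (k+2) * (\<Prod>j=1..k+1. 1 + (c j)^2)))
               else 0)))
       \<and> (multiple_param_seqs d \<longrightarrow>
           (\<integral>\<^sup>+ \<zeta>. (if \<zeta> = 1 then \<infinity> else ennreal (1 / (cmod (\<zeta> - 1))^2)) \<partial>\<mu>) < \<infinity>)"
proof -
  interpret chain_verblunsky \<mu> c d l
    using mu minl verb by unfold_locales auto
  show ?thesis
    using monic_OP_Phi poly_Phi_closed_form integral_cnj_Phi_mult_Phi
      nn_integral_inverse_dist_sq_one_finite
    unfolding monic_OPs_def by blast
qed

end
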